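(* Let $N_p\in\mathbb{N}$, $A,B\in\mathbb{C}^{N_p\times N_p}$ with $A^\dagger=A$, $B^T=B$, let $\Omega=\operatorname{diag}[\Omega_i]_{i=1}^{N_p}$ with all $\Omega_i>0$, and let $X,Y\in\mathbb{C}^{N_p\times N_p}$ be such that $W=\begin{bmatrix} X & Y^*\\ Y & X^*\end{bmatrix}$ satisfies $$\eta\begin{bmatrix} A & B\\ B^* & A^*\end{bmatrix}=W\begin{bmatrix}+\Omega & 0\\ 0&-\Omega\end{bmatrix}W^{-1},\qquad W^{-1}=\eta W^\dagger\eta,\qquad \eta=\begin{bmatrix}+I&0\\0&-I\end{bmatrix}.$$ Let $x_i=X\mathbf e_i$, $y_i=Y\mathbf e_i$, let $\widetilde\Omega_1,\dots,\widetilde\Omega_{N_p}>0$, $\widetilde\Omega=\operatorname{diag}[\widetilde\Omega_i]$, and define $$\widetilde A=A+\sum_{i=1}^{N_p}(\widetilde\Omega_i-\Omega_i)\big[x_ix_i^\dagger+(y_iy_i^\dagger)^*\big],\qquad \widetilde B=B+\sum_{i=1}^{N_p}(\widetilde\Omega_i-\Omega_i)\big[-x_iy_i^\dagger-(x_iy_i^\dagger)^T\big].$$ Then $$\eta\begin{bmatrix} \widetilde A & \widetilde B\\ \widetilde B^* & \widetilde A^*\end{bmatrix}=W\begin{bmatrix}+\widetilde\Omega & 0\\ 0&-\widetilde\Omega\end{bmatrix}W^{-1},$$ i.e. the modified QRPA matrix has the same eigenvector matrix $W$ (still satisfying $W^{-1}=\eta W^\dagger\eta$) with eigenfrequencies $\widetilde\Omega_i$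 in place of $\Omega_i$.
   Context: $A^\dagger$, $A^T$, $A^*$ denote conjugate transpose, transpose and entrywise complex conjugate; $\mathbf e_i$ is the $i$-th standard basis vector of $\mathbb{C}^{N_p}$; $\operatorname{diag}[\cdot]$ is the diagonal matrix with the given diagonal entries. The matrix $\eta\begin{bmatrix} A & B\\ B^* & A^*\end{bmatrix}$ is the QRPA matrix. *)

theory Defs
  imports "HOL-Analysis.Analysis"
begin

text \<open>Complex N_p x N_p matrices are rendered as complex^'n^'n with 'n a finite
index type (N_p = CARD('n)); 2N_p x 2N_p block matrices are indexed by 'n + 'n,
with Inl indexing the first block and Inr the second.\<close>

definition cnjm :: "complex^'m^'n \<Rightarrow> complex^'m^'n" where
  "cnjm M = (\<chi> i j. cnj (M $ i $ j))"

definition adj :: "complex^'m^'n \<Rightarrow> complex^'n^'m" where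
  "adj M = transpose (cnjm M)"

definition block ::
  "complex^'n^'n \<Rightarrow> complex^'n^'n \<Rightarrow> complex^'n^'n \<Rightarrow> complex^'n^'n
   \<Rightarrow> complex^('n + 'n)^('n + 'n)" where
  "block P Q R S = (\<chi> i j. case i of
       Inl a \<Rightarrow> (case j of Inl b \<Rightarrow> P $ a $ b | Inr b \<Rightarrow> Q $ a $ b)
     | Inr a \<Rightarrow> (case j of Inl b \<Rightarrow> R $ a $ b | Inr b \<Rightarrow> S $ a $ b))"

definition eta :: "complex^('n::finite + 'n)^('n + 'n)" where
  "eta = block (mat 1) 0 0 (- mat 1)"

definition diagm :: "('n \<Rightarrow> real) \<Rightarrow> complex^'n^'n" where
  "diagm d = (\<chi> i j. if i = j then complex_of_real (d i) else 0)"

definition outer :: "complex^'n \<Rightarrow> complex^'n \<Rightarrow> complex^'n^'n" where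
  "outer x y = (\<chi> a b. x $ a * cnj (y $ b))"

end

theory Submission
  imports Defs
begin

(* Because W^-1 = eta W^dagger eta, for D = diag(d, -d) we get W D W^-1 = W diag(d, d) W^dagger eta.
   The blocks of W diag(d, d) W^dagger are weighted sums of outer products of the columns
   [x_i; y_i] and [conj y_i; conj x_i] of W, and after multiplying by eta they are exactly the
   corrections added to A and B.  Since W D W^-1 is linear in D, adding this identity for
   d = Omega~ - Omega to the hypothesis for Omega gives the claim. *)

lemma block_mult:
  "block P Q R S ** block P' Q' R' S' =
   block (P ** P' + Q ** R') (P ** Q' + Q ** S') (R ** P' + S ** R') (R ** Q' + S ** S')"
  unfolding block_def matrix_matrix_mult_def
  by (simp add: vec_eq_iff UNIV_Plus_UNIV[symmetric] sum.Plus o_def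
      split: sum.splits del: UNIV_Plus_UNIV)

lemma block_add:
  "block P Q R S + block P' Q' R' S' = block (P + P') (Q + Q') (R + R') (S + S')"
  unfolding block_def by (simp add: vec_eq_iff split: sum.splits)

lemma adj_block: "adj (block P Q R S) = block (adj P) (adj R) (adj Q) (adj S)"
  unfolding block_def adj_def cnjm_def transpose_def
  by (simp add: vec_eq_iff split: sum.splits)

lemma matrix_mult_uminus_left: "(- A) ** B = - (A ** (B :: 'a::ring_1^_^_))"
  unfolding matrix_matrix_mult_def by (simp add: vec_eq_iff sum_negf)

lemma matrix_mult_uminus_right: "A ** (- B) = - (A ** (B :: 'a::ring_1^_^_))"
  unfolding matrix_matrix_mult_def by (simp add: vec_eq_iff sum_negf)

lemma matrix_add_rdistrib: "(A + B) ** (C :: 'a::semiring_1^_^_) = A ** C + B ** C"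
  unfolding matrix_matrix_mult_def by (simp add: vec_eq_iff distrib_right sum.distrib)

lemma eta_mult_block: "eta ** block P Q R S = block P Q (- R) (- S)"
  unfolding eta_def by (simp add: block_mult matrix_mult_uminus_left)

lemma block_mult_eta: "block P Q R S ** eta = block P (- Q) R (- S)"
  unfolding eta_def by (simp add: block_mult matrix_mult_uminus_right)

lemma cnjm_add: "cnjm (P + Q) = cnjm P + cnjm Q"
  unfolding cnjm_def by (simp add: vec_eq_iff)

lemma cnjm_uminus: "cnjm (- P) = - cnjm P"
  unfolding cnjm_def by (simp add: vec_eq_iff)

lemma cnjm_cnjm: "cnjm (cnjm M) = M"
  unfolding cnjm_def by (simp add: vec_eq_iff)

lemma cnjm_adj: "cnjm (adj M) = transpose M"
  unfolding cnjm_def adj_def transpose_def by (simp add: vec_eq_iff)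

lemma diagm_add: "diagm (\<lambda>i. a i + b i) = diagm a + diagm b"
  unfolding diagm_def by (simp add: vec_eq_iff)

lemma cnjm_scaleR: "cnjm (r *\<^sub>R M) = r *\<^sub>R cnjm M"
  unfolding cnjm_def by (simp add: vec_eq_iff)

lemma cnjm_sum: "cnjm (\<Sum>i\<in>I. M i) = (\<Sum>i\<in>I. cnjm (M i))"
  unfolding cnjm_def by (simp add: vec_eq_iff sum_component cnj_sum)

lemma transpose_sum: "transpose (\<Sum>i\<in>I. M i) = (\<Sum>i\<in>I. transpose (M i))"
  unfolding transpose_def by (simp add: vec_eq_iff sum_component)

lemma adj_diag_sandwich: "adj (P ** diagm d ** adj Q) = Q ** diagm d ** adj P"
  unfolding adj_def cnjm_def transpose_def matrix_matrix_mult_def diagm_def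
  by (simp add: vec_eq_iff if_distrib mult_ac cong: if_cong)

lemma cnjm_diag_sandwich: "cnjm P ** diagm d ** adj (cnjm Q) = cnjm (P ** diagm d ** adj Q)"
  unfolding adj_def cnjm_def transpose_def matrix_matrix_mult_def diagm_def
  by (simp add: vec_eq_iff if_distrib cong: if_cong)

lemma diag_sandwich_eq_sum_outer:
  "P ** diagm d ** adj Q = (\<Sum>i\<in>UNIV. d i *\<^sub>R outer (column i P) (column i Q))"
  unfolding adj_def cnjm_def transpose_def matrix_matrix_mult_def diagm_def outer_def column_def
  by (simp add: vec_eq_iff if_distrib cong: if_cong) (simp add: scaleR_conv_of_real mult_ac)

lemma eta_mult_block_eq_sandwich_diag:
  fixes X Y :: "complex^'n::finite^'n" and d :: "'n \<Rightarrow> real"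
  defines "W \<equiv> block X (cnjm Y) Y (cnjm X)"
    and "E \<equiv> X ** diagm d ** adj X + cnjm (Y ** diagm d ** adj Y)"
    and "F \<equiv> - (X ** diagm d ** adj Y + transpose (X ** diagm d ** adj Y))"
  shows "eta ** block E F (cnjm F) (cnjm E)
       = W ** block (diagm d) 0 0 (- diagm d) ** (eta ** adj W ** eta)"
proof -
  let ?S = "X ** diagm d ** adj Y"
  have "W ** block (diagm d) 0 0 (diagm d) ** adj W
      = block E (?S + transpose ?S) (cnjm (?S + transpose ?S)) (cnjm E)"
  proof -
    have "adj ?S = cnjm (transpose ?S)"
      by (metis cnjm_adj cnjm_cnjm)
    then show ?thesis
      unfolding W_def E_def
      by (simp add: block_mult adj_block cnjm_diag_sandwich adj_diag_sandwich cnjm_adj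
          cnjm_cnjm cnjm_add add.commute)
  qed
  moreover have "W ** block (diagm d) 0 0 (- diagm d) ** (eta ** adj W ** eta)
      = W ** (block (diagm d) 0 0 (- diagm d) ** eta) ** adj W ** eta"
    by (simp add: matrix_mul_assoc)
  ultimately show ?thesis
    by (simp only: eta_mult_block block_mult_eta F_def cnjm_uminus minus_zero
        minus_minus)
qed

lemma sum_outer_columns_diagonal_block:
  "(\<Sum>i\<in>UNIV. d i *\<^sub>R
      (outer (column i X) (column i X) + cnjm (outer (column i Y) (column i Y))))
   = X ** diagm d ** adj X + cnjm (Y ** diagm d ** adj Y)"
  by (simp add: diag_sandwich_eq_sum_outer scaleR_add_right sum.distrib cnjm_sum cnjm_scaleR)

lemma sum_outer_columns_offdiagonal_block:
  "(\<Sum>i\<in>UNIV. d i *\<^sub>R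
      (- outer (column i X) (column i Y) - transpose (outer (column i X) (column i Y))))
   = - (X ** diagm d ** adj Y + transpose (X ** diagm d ** adj Y))"
  by (simp add: diag_sandwich_eq_sum_outer scaleR_diff_right sum_subtractf sum_negf
      transpose_sum transpose_scalar)

lemma block_diagm_add:
  "block (diagm (\<lambda>i. a i + b i)) 0 0 (- diagm (\<lambda>i. a i + b i))
   = block (diagm a) 0 0 (- diagm a) + block (diagm b) 0 0 (- diagm b)"
  by (simp add: block_add diagm_add)

theorem mainTheorem3:
  fixes A B X Y :: "complex^'n::finite^'n"
    and \<Omega> \<Omega>t :: "'n \<Rightarrow> real"
  assumes hA: "adj A = A"
    and hB: "transpose B = B"
    and hOm: "\<forall>i. \<Omega> i > 0"
    and hWinv: "invertible (block X (cnjm Y) Y (cnjm X))"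
    and hdiag: "eta ** block A B (cnjm B) (cnjm A)
        = block X (cnjm Y) Y (cnjm X) ** block (diagm \<Omega>) 0 0 (- diagm \<Omega>)
          ** matrix_inv (block X (cnjm Y) Y (cnjm X))"
    and hsympl: "matrix_inv (block X (cnjm Y) Y (cnjm X))
        = eta ** adj (block X (cnjm Y) Y (cnjm X)) ** eta"
    and hOmt: "\<forall>i. \<Omega>t i > 0"
  shows "eta ** block
            (A + (\<Sum>i\<in>UNIV. (\<Omega>t i - \<Omega> i) *\<^sub>R
                  (outer (column i X) (column i X) + cnjm (outer (column i Y) (column i Y)))))
            (B + (\<Sum>i\<in>UNIV. (\<Omega>t i - \<Omega> i) *\<^sub>R
                  (- outer (column i X) (column i Y) - transpose (outer (column i X) (column i Y)))))
            (cnjm (B + (\<Sum>i\<in>UNIV. (\<Omega>t i - \<Omega> i) *\<^sub>R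
                  (- outer (column i X) (column i Y) - transpose (outer (column i X) (column i Y))))))
            (cnjm (A + (\<Sum>i\<in>UNIV. (\<Omega>t i - \<Omega> i) *\<^sub>R
                  (outer (column i X) (column i X) + cnjm (outer (column i Y) (column i Y))))))
        = block X (cnjm Y) Y (cnjm X) ** block (diagm \<Omega>t) 0 0 (- diagm \<Omega>t)
          ** matrix_inv (block X (cnjm Y) Y (cnjm X))"
proof -
  define W where "W = block X (cnjm Y) Y (cnjm X)"
  define \<delta> where "\<delta> = (\<lambda>i. \<Omega>t i - \<Omega> i)"
  define E where "E = X ** diagm \<delta> ** adj X + cnjm (Y ** diagm \<delta> ** adj Y)"
  define F where "F = - (X ** diagm \<delta> ** adj Y + transpose (X ** diagm \<delta> ** adj Y))"
  have "eta ** block (A + E) (B + F) (cnjm (B + F)) (cnjm (A + E))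
      = eta ** block A B (cnjm B) (cnjm A) + eta ** block E F (cnjm F) (cnjm E)"
    by (simp add: cnjm_add block_add flip: matrix_add_ldistrib)
  also have "\<dots> = W ** block (diagm \<Omega>) 0 0 (- diagm \<Omega>) ** matrix_inv W
      + W ** block (diagm \<delta>) 0 0 (- diagm \<delta>) ** matrix_inv W"
    using hdiag hsympl eta_mult_block_eq_sandwich_diag[where d = \<delta>]
    by (simp only: W_def E_def F_def)
  also have "\<dots> = W ** block (diagm \<Omega>t) 0 0 (- diagm \<Omega>t) ** matrix_inv W"
    using block_diagm_add[of \<Omega> \<delta>]
    by (simp add: \<delta>_def matrix_add_ldistrib matrix_add_rdistrib)
  finally show ?thesis
    by (simp only: W_def E_def F_def \<delta>_def sum_outer_columns_diagonal_block
        sum_outer_columns_offdiagonal_block)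
qed

end
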